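(* Let $G=(V,E)$ be a finite simple graph on $n$ vertices with adjacency matrix $A$ having eigenvalues $\lambda_1\ge\cdots\ge\lambda_n$, let $k\ge1$, and let $p\in\mathbb{R}_k[x]$ be such that $p(\lambda_1)>p(\lambda_i)$ for all $i\in\{2,\dots,n\}$. Let $W(p):=\max_{u\in V}(p(A))_{uu}$ and $\lambda(p):=\min_{2\le i\le n}p(\lambda_i)$. Then $$\chi_{kq}(G)\ \ge\ \frac{p(\lambda_1)-\lambda(p)}{W(p)-\lambda(p)}.$$
   Context: $\mathbb{R}_k[x]$ denotes the real polynomials of degree at most $k$. $\mathrm{dist}$ is the graph distance in $G$, $[c]=\{1,\dots,c\}$. A quantum $k$-distance $c$-coloring of $G$ is a collection of orthogonal projectors $\{P_{v,h} : v\in V, h\in[c]\}$ in $\mathbb{C}^{d\times d}$ (some $d\ge1$) with $\sum_{h}P_{v,h}=I_d$ for each $v$ and $P_{v,h}P_{w,h}=0$ for all distinct $v,w$ with $\mathrm{dist}(v,w)\le k$ and all $h$. $\chi_{kq}(G)$ is the smallest $c$ admitting such a coloring for some $d>0$; equivalently the quantum chromatic number of the $k$-th power graph $G^k$. *)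

theory Defs
  imports "Jordan_Normal_Form.Schur_Decomposition" "HOL-Computational_Algebra.Polynomial"
begin

definition simple_graph :: "nat \<Rightarrow> (nat \<Rightarrow> nat \<Rightarrow> bool) \<Rightarrow> bool" where
  "simple_graph n E \<longleftrightarrow> (\<forall>u v. E u v \<longrightarrow> u < n \<and> v < n) \<and>
     (\<forall>u v. E u v \<longrightarrow> E v u) \<and> (\<forall>u. \<not> E u u)"

definition adj_mat :: "nat \<Rightarrow> (nat \<Rightarrow> nat \<Rightarrow> bool) \<Rightarrow> real mat" where
  "adj_mat n E = mat n n (\<lambda>(i,j). if E i j then 1 else 0)"

definition dist_le :: "(nat \<Rightarrow> nat \<Rightarrow> bool) \<Rightarrow> nat \<Rightarrow> nat \<Rightarrow> nat \<Rightarrow> bool" where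
  "dist_le E k v w \<longleftrightarrow> (\<exists>l\<le>k. (v, w) \<in> {(x,y). E x y} ^^ l)"

definition mat_poly :: "'a::comm_ring_1 poly \<Rightarrow> 'a mat \<Rightarrow> 'a mat" where
  "mat_poly p A = foldr (\<lambda>c M. c \<cdot>\<^sub>m 1\<^sub>m (dim_row A) + A * M) (coeffs p) (0\<^sub>m (dim_row A) (dim_row A))"

definition mat_sum :: "nat \<Rightarrow> (nat \<Rightarrow> 'a::comm_ring_1 mat) \<Rightarrow> nat \<Rightarrow> 'a mat" where
  "mat_sum d f c = foldr (\<lambda>h M. f h + M) [1..<c+1] (0\<^sub>m d d)"

definition orth_projector :: "nat \<Rightarrow> complex mat \<Rightarrow> bool" where
  "orth_projector d P \<longleftrightarrow> P \<in> carrier_mat d d \<and> P * P = P \<and> mat_adjoint P = P"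

definition quantum_k_coloring ::
  "nat \<Rightarrow> (nat \<Rightarrow> nat \<Rightarrow> bool) \<Rightarrow> nat \<Rightarrow> nat \<Rightarrow> nat \<Rightarrow> (nat \<Rightarrow> nat \<Rightarrow> complex mat) \<Rightarrow> bool" where
  "quantum_k_coloring n E k c d P \<longleftrightarrow>
     (\<forall>v<n. \<forall>h\<in>{1..c}. orth_projector d (P v h)) \<and>
     (\<forall>v<n. mat_sum d (P v) c = 1\<^sub>m d) \<and>
     (\<forall>v<n. \<forall>w<n. v \<noteq> w \<longrightarrow> dist_le E k v w \<longrightarrow>
        (\<forall>h\<in>{1..c}. P v h * P w h = 0\<^sub>m d d))"

definition chi_kq :: "nat \<Rightarrow> (nat \<Rightarrow> nat \<Rightarrow> bool) \<Rightarrow> nat \<Rightarrow> nat" where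
  "chi_kq n E k = (LEAST c. \<exists>d>0. \<exists>P. quantum_k_coloring n E k c d P)"

end

theory Submission
  imports Defs
begin

text \<open>Let \<open>B = p(A)\<close>, \<open>\<mu> = p(\<lambda>\<^sub>1)\<close> and \<open>\<lambda> = \<lambda>(p)\<close>. Since \<open>p \<ge> \<lambda>\<close> on the spectrum,
  \<open>p - \<lambda>\<close> agrees there with the square of a polynomial, and because a polynomial vanishing
  on the spectrum of a symmetric matrix vanishes at the matrix, \<open>B - \<lambda> I\<close> is positive
  semidefinite. Splitting off a unit eigenvector \<open>w\<close> of \<open>\<lambda>\<^sub>1\<close> gives
  \<open>x\<^sup>T B x \<ge> \<lambda> |x|\<^sup>2 + (\<mu> - \<lambda>) (w \<bullet> x)\<^sup>2\<close>.

  As \<open>deg p \<le> k\<close>, \<open>B\<^sub>u\<^sub>v \<noteq> 0\<close> forces \<open>dist(u,v) \<le> k\<close>, so in a quantum \<open>k\<close>-distance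
  colouring the vectors \<open>P\<^sub>u\<^sub>,\<^sub>h e\<^sub>0\<close> of a fixed colour \<open>h\<close> are orthogonal along the support
  of \<open>B\<close>. Applying the bound to the real coordinates of \<open>w\<^sub>u P\<^sub>u\<^sub>,\<^sub>h e\<^sub>0\<close> and summing over
  all coordinates and colours gives \<open>W(p) \<ge> \<lambda> + (\<mu> - \<lambda>) \<Sum>\<^sub>h \<tau>\<^sub>h\<^sup>2\<close> with
  \<open>\<tau>\<^sub>h = \<Sum>\<^sub>u w\<^sub>u\<^sup>2 (P\<^sub>u\<^sub>,\<^sub>h)\<^sub>0\<^sub>0\<close>. These weights sum to 1, so Cauchy-Schwarz gives
  \<open>\<Sum>\<^sub>h \<tau>\<^sub>h\<^sup>2 \<ge> 1/c\<close>.\<close>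

section \<open>Polynomials evaluated at square matrices\<close>

lemma mat_poly_0 [simp]: "mat_poly 0 A = 0\<^sub>m (dim_row A) (dim_row A)"
  by (simp add: mat_poly_def)

lemma mat_poly_dim [simp]:
  "dim_row (mat_poly p A) = dim_row A" "dim_col (mat_poly p A) = dim_row A"
proof -
  let ?n = "dim_row A"
  have "foldr (\<lambda>c M. c \<cdot>\<^sub>m 1\<^sub>m ?n + A * M) cs (0\<^sub>m ?n ?n) \<in> carrier_mat ?n ?n" for cs
    by (induct cs) auto
  then show "dim_row (mat_poly p A) = dim_row A" "dim_col (mat_poly p A) = dim_row A"
    unfolding mat_poly_def by auto
qed

lemma mat_poly_carrier [simp]: "A \<in> carrier_mat n m \<Longrightarrow> mat_poly p A \<in> carrier_mat n n"
  by auto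

lemma mat_poly_pCons:
  assumes A: "A \<in> carrier_mat n n"
  shows "mat_poly (pCons a p) A = a \<cdot>\<^sub>m 1\<^sub>m n + A * mat_poly p A"
proof (cases "a = 0 \<and> p = 0")
  case True
  with A show ?thesis by (auto intro!: eq_matI)
next
  case False
  then have "coeffs (pCons a p) = a # coeffs p"
    by (auto simp: cCons_def)
  with A show ?thesis by (simp add: mat_poly_def)
qed

lemma mat_poly_const:
  assumes A: "A \<in> carrier_mat n n"
  shows "mat_poly [:c:] A = c \<cdot>\<^sub>m 1\<^sub>m n"
  using mat_poly_pCons[OF A, of c 0] A by (auto intro!: eq_matI)

lemma mat_poly_1:
  assumes A: "A \<in> carrier_mat n n"
  shows "mat_poly 1 A = 1\<^sub>m n"
  using mat_poly_const[OF A, of 1] by (auto simp: one_pCons intro!: eq_matI)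

lemma mat_poly_pCons_0:
  assumes A: "A \<in> carrier_mat n n"
  shows "mat_poly (pCons 0 p) A = A * mat_poly p A"
  using A by (simp add: mat_poly_pCons[OF A]) (auto intro!: eq_matI)

lemma mat_poly_X:
  assumes A: "A \<in> carrier_mat n n"
  shows "mat_poly [:0, 1:] A = A"
proof -
  have "A * (1 \<cdot>\<^sub>m 1\<^sub>m n) = 1 \<cdot>\<^sub>m A"
    using A by (simp add: mult_smult_distrib[OF A one_carrier_mat])
  with A show ?thesis
    by (simp add: mat_poly_pCons[OF A] mat_poly_const[OF A]) (auto intro!: eq_matI)
qed

lemma mat_poly_add:
  assumes A: "A \<in> carrier_mat n n"
  shows "mat_poly (p + q) A = mat_poly p A + mat_poly q A"
proof (induct p arbitrary: q)
  case 0
  with A show ?case by simp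
next
  case (pCons a p)
  show ?case
  proof (cases q)
    case (pCons b q')
    have P: "mat_poly p A \<in> carrier_mat n n" and Q: "mat_poly q' A \<in> carrier_mat n n"
      using A by auto
    have "mat_poly (pCons a p + q) A = (a + b) \<cdot>\<^sub>m 1\<^sub>m n + (A * mat_poly p A + A * mat_poly q' A)"
      using pCons.hyps(2)
      by (simp add: \<open>q = pCons b q'\<close> mat_poly_pCons[OF A] mult_add_distrib_mat[OF A P Q])
    also have "\<dots> = (a \<cdot>\<^sub>m 1\<^sub>m n + A * mat_poly p A) + (b \<cdot>\<^sub>m 1\<^sub>m n + A * mat_poly q' A)"
      using A P Q by (auto intro!: eq_matI simp: algebra_simps)
    finally show ?thesis
      by (simp add: \<open>q = pCons b q'\<close> mat_poly_pCons[OF A])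
  qed
qed

lemma mat_poly_smult:
  assumes A: "A \<in> carrier_mat n n"
  shows "mat_poly (smult c p) A = c \<cdot>\<^sub>m mat_poly p A"
proof (induct p)
  case 0
  with A show ?case by auto
next
  case (pCons a p)
  have P: "mat_poly p A \<in> carrier_mat n n" using A by auto
  have "mat_poly (smult c (pCons a p)) A = (c * a) \<cdot>\<^sub>m 1\<^sub>m n + c \<cdot>\<^sub>m (A * mat_poly p A)"
    using pCons.hyps(2) by (simp add: mat_poly_pCons[OF A] mult_smult_distrib[OF A P])
  also have "\<dots> = c \<cdot>\<^sub>m (a \<cdot>\<^sub>m 1\<^sub>m n + A * mat_poly p A)"
    using A P by (auto intro!: eq_matI simp: algebra_simps)
  finally show ?case by (simp add: mat_poly_pCons[OF A])
qed

lemma mat_poly_mult: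
  assumes A: "A \<in> carrier_mat n n"
  shows "mat_poly (p * q) A = mat_poly p A * mat_poly q A"
proof (induct p)
  case 0
  with A show ?case by (simp add: left_mult_zero_mat[of _ n n])
next
  case (pCons a p)
  have P: "mat_poly p A \<in> carrier_mat n n" and Q: "mat_poly q A \<in> carrier_mat n n"
    using A by auto
  have "mat_poly (pCons a p * q) A = a \<cdot>\<^sub>m mat_poly q A + A * (mat_poly p A * mat_poly q A)"
    using pCons.hyps(2) by (simp add: mat_poly_add[OF A] mat_poly_smult[OF A] mat_poly_pCons_0[OF A])
  also have "\<dots> = (a \<cdot>\<^sub>m 1\<^sub>m n + A * mat_poly p A) * mat_poly q A"
    using A P Q
    by (simp add: add_mult_distrib_mat[of _ n n _ "mat_poly q A" n] mult_smult_assoc_mat[of _ n n "mat_poly q A" n]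
        assoc_mult_mat[OF A P Q])
  finally show ?case by (simp add: mat_poly_pCons[OF A])
qed

lemma mat_poly_commute:
  assumes A: "A \<in> carrier_mat n n"
  shows "A * mat_poly p A = mat_poly p A * A"
  using mat_poly_mult[OF A, of "[:0, 1:]" p] mat_poly_mult[OF A, of p "[:0, 1:]"]
  by (simp add: mat_poly_X[OF A] mult.commute)

lemma mat_poly_transpose:
  assumes A: "A \<in> carrier_mat n n"
  shows "transpose_mat (mat_poly p A) = mat_poly p (transpose_mat A)"
proof (induct p)
  case 0
  with A show ?case by (auto intro!: eq_matI)
next
  case (pCons a p)
  have At: "transpose_mat A \<in> carrier_mat n n" and P: "mat_poly p A \<in> carrier_mat n n"
    using A by auto
  have "transpose_mat (a \<cdot>\<^sub>m 1\<^sub>m n) = a \<cdot>\<^sub>m 1\<^sub>m n"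
    by (auto intro!: eq_matI)
  then have "transpose_mat (mat_poly (pCons a p) A) = a \<cdot>\<^sub>m 1\<^sub>m n + transpose_mat (mat_poly p A) * transpose_mat A"
    using A P by (simp add: mat_poly_pCons[OF A] transpose_add[of _ n n] transpose_mult[OF A P])
  also have "\<dots> = mat_poly (pCons a p) (transpose_mat A)"
    using pCons.hyps(2) by (simp add: mat_poly_pCons[OF At] mat_poly_commute[OF At])
  finally show ?case .
qed

lemma mat_poly_intertwine:
  assumes A: "A \<in> carrier_mat n n" and T: "T \<in> carrier_mat n n" and P: "P \<in> carrier_mat n n"
    and AP: "A * P = P * T"
  shows "mat_poly f A * P = P * mat_poly f T"
proof (induct f)
  case 0
  with A T P show ?case by auto
next
  case (pCons a f)
  have FA: "mat_poly f A \<in> carrier_mat n n" and FT: "mat_poly f T \<in> carrier_mat n n"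
    using A T by auto
  have "mat_poly (pCons a f) A * P = a \<cdot>\<^sub>m P + A * (mat_poly f A * P)"
    using A P FA
    by (simp add: mat_poly_pCons[OF A] add_mult_distrib_mat[of _ n n _ P n] assoc_mult_mat[OF A FA P]
        mult_smult_assoc_mat[of _ n n P n])
  also have "\<dots> = a \<cdot>\<^sub>m P + P * (T * mat_poly f T)"
    using A T P FT by (simp add: pCons.hyps(2) AP flip: assoc_mult_mat[of _ n n _ n _ n])
  also have "\<dots> = P * mat_poly (pCons a f) T"
    using T P FT
    by (simp add: mat_poly_pCons[OF T] mult_add_distrib_mat[of P n n _ n] mult_smult_distrib[of P n n _ n])
  finally show ?case .
qed

section \<open>Polynomials vanishing on the spectrum of a symmetric matrix\<close>

lemma index_mult_mat_sum:
  assumes "X \<in> carrier_mat n m" "Y \<in> carrier_mat m k" "i < n" "j < k"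
  shows "(X * Y) $$ (i, j) = (\<Sum>l<m. X $$ (i, l) * Y $$ (l, j))"
  using assms by (auto simp: scalar_prod_def atLeast0LessThan intro!: sum.cong)

lemma index_mat_poly_pCons:
  assumes A: "A \<in> carrier_mat n n" and "i < n" "j < n"
  shows "mat_poly (pCons a p) A $$ (i, j) =
    (if i = j then a else 0) + (\<Sum>l<n. A $$ (i, l) * mat_poly p A $$ (l, j))"
  using assms index_mult_mat_sum[OF A mat_poly_carrier[OF A], of i j p]
  by (simp add: mat_poly_pCons[OF A])

lemma mat_poly_upper_triangular:
  assumes T: "T \<in> carrier_mat n n" and ut: "upper_triangular T"
  shows "upper_triangular (mat_poly f T) \<and> (\<forall>i<n. mat_poly f T $$ (i, i) = poly f (T $$ (i, i)))"
proof (induct f)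
  case 0
  with T show ?case by auto
next
  case (pCons a f)
  have T_low: "T $$ (i, l) = 0" if "i < n" "l < i" for i l
    using ut T that by auto
  have F_low: "mat_poly f T $$ (l, j) = 0" if "l < n" "j < l" for l j
    using pCons.hyps(2) T that by auto
  have row_sum: "(\<Sum>l<n. T $$ (i, l) * mat_poly f T $$ (l, j)) =
      (if i = j then T $$ (i, i) * mat_poly f T $$ (i, i) else 0)" if "i < n" "j \<le> i" for i j
  proof -
    have "T $$ (i, l) * mat_poly f T $$ (l, j) = (if l = i \<and> i = j then T $$ (i, i) * mat_poly f T $$ (i, i) else 0)"
      if "l < n" for l
      using T_low[of i l] F_low[of l j] \<open>i < n\<close> \<open>j \<le> i\<close> that by (cases "l < i") auto
    with \<open>i < n\<close> show ?thesis by (simp add: sum.delta)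
  qed
  show ?case
    using T pCons.hyps(2) by (auto simp: index_mat_poly_pCons[OF T] row_sum)
qed

lemma mat_poly_power_band:
  assumes T: "T \<in> carrier_mat n n" and ut: "upper_triangular T"
    and r: "\<And>i. i < n \<Longrightarrow> poly r (T $$ (i, i)) = 0"
    and "i < n" "j < n" "j < i + m"
  shows "mat_poly (r ^ m) T $$ (i, j) = 0"
  using assms(4-)
proof (induct m arbitrary: i)
  case 0
  then show ?case by (simp add: mat_poly_1[OF T])
next
  case (Suc m)
  have R: "mat_poly r T $$ (i, l) = 0" if "i < n" "l \<le> i" for i l
    using mat_poly_upper_triangular[OF T ut, of r] r that T by (cases "l = i") auto
  have "mat_poly r T $$ (i, l) * mat_poly (r ^ m) T $$ (l, j) = 0" if "l < n" for l
  proof (cases "l \<le> i")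
    case True
    with R Suc.prems show ?thesis by simp
  next
    case False
    with Suc.hyps[of l] Suc.prems that show ?thesis by simp
  qed
  then have "(\<Sum>l<n. mat_poly r T $$ (i, l) * mat_poly (r ^ m) T $$ (l, j)) = 0"
    by simp
  with Suc.prems show ?case
    using index_mult_mat_sum[OF mat_poly_carrier[OF T] mat_poly_carrier[OF T], of i j r "r ^ m"]
    by (simp add: mat_poly_mult[OF T])
qed

lemma symmetric_matD:
  assumes "M \<in> carrier_mat n n" "transpose_mat M = M" "u < n" "v < n"
  shows "M $$ (u, v) = M $$ (v, u)"
proof -
  have "transpose_mat M $$ (v, u) = M $$ (u, v)"
    using assms(1,3,4) by simp
  with assms(2) show ?thesis
    by simp
qed

lemma symmetric_square_eq_0:
  fixes S :: "real mat"
  assumes S: "S \<in> carrier_mat n n" and sym: "transpose_mat S = S" and sq: "S * S = 0\<^sub>m n n"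
  shows "S = 0\<^sub>m n n"
proof (rule eq_matI)
  fix i j assume ij: "i < dim_row (0\<^sub>m n n :: real mat)" "j < dim_col (0\<^sub>m n n :: real mat)"
  have "S $$ (j, l) = S $$ (l, j)" if "l < n" for l
    using symmetric_matD[OF S sym, of j l] ij that by simp
  then have "(\<Sum>l<n. (S $$ (l, j))\<^sup>2) = (S * S) $$ (j, j)"
    using index_mult_mat_sum[OF S S, of j j] ij by (simp add: power2_eq_square)
  also have "\<dots> = 0"
    using sq ij by simp
  finally have "\<forall>l\<in>{..<n}. (S $$ (l, j))\<^sup>2 = 0"
    by (subst sum_nonneg_eq_0_iff[symmetric]) auto
  with ij show "S $$ (i, j) = 0\<^sub>m n n $$ (i, j)"
    by simp
qed (use S in auto)

lemma mat_poly_power_eq_0_imp_eq_0: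
  fixes A :: "real mat"
  assumes A: "A \<in> carrier_mat n n" and sym: "transpose_mat A = A"
  shows "mat_poly (r ^ m) A = 0\<^sub>m n n \<Longrightarrow> mat_poly r A = 0\<^sub>m n n"
proof (induct m rule: less_induct)
  case (less m)
  consider "m = 0" | "m = 1" | "m \<ge> 2"
    by linarith
  then show ?case
  proof cases
    case 1
    with less.prems have "1\<^sub>m n = (0\<^sub>m n n :: real mat)"
      by (simp add: mat_poly_1[OF A])
    then have "n = 0"
      by (metis index_one_mat(1) index_zero_mat(1) zero_neq_one neq0_conv)
    with A show ?thesis
      by (auto intro!: eq_matI)
  next
    case 2
    with less.prems show ?thesis by simp
  next
    case 3
    define j where "j = (m + 1) div 2"
    have j: "j < m" "m \<le> 2 * j"
      using 3 unfolding j_def by auto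
    have "mat_poly (r ^ j) A * mat_poly (r ^ j) A = mat_poly (r ^ (2 * j - m) * r ^ m) A"
      using j by (simp add: mat_poly_mult[OF A, symmetric] power_add[symmetric] mult_2)
    also have "\<dots> = 0\<^sub>m n n"
      using less.prems A by (simp add: mat_poly_mult[OF A])
    finally have "mat_poly (r ^ j) A = 0\<^sub>m n n"
      using symmetric_square_eq_0[OF mat_poly_carrier[OF A]] mat_poly_transpose[OF A] sym by simp
    with less.hyps j show ?thesis
      by blast
  qed
qed

text \<open>In a Schur form \<open>A = P T Q\<close> the matrix \<open>r(T)\<close> is strictly upper triangular,
  so \<open>r\<^sup>n(A) = 0\<close>; symmetry then removes the power.\<close>
lemma mat_poly_eq_0_if_vanishes_on_eigenvalues:
  fixes A :: "real mat"
  assumes A: "A \<in> carrier_mat n n" and sym: "transpose_mat A = A"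
    and cp: "char_poly A = (\<Prod>a\<leftarrow>ev. [:- a, 1:])"
    and r: "\<And>x. x \<in> set ev \<Longrightarrow> poly r x = 0"
  shows "mat_poly r A = 0\<^sub>m n n"
proof -
  obtain T P Q where "schur_decomposition A ev = (T, P, Q)"
    by (cases "schur_decomposition A ev") auto
  from schur_decomposition[OF A cp this]
  have sim: "similar_mat_wit A T P Q" and ut: "upper_triangular T" and diag: "diag_mat T = ev"
    by auto
  from similar_mat_witD2[OF A sim]
  have T: "T \<in> carrier_mat n n" and P: "P \<in> carrier_mat n n" and Q: "Q \<in> carrier_mat n n"
    and PQ: "P * Q = 1\<^sub>m n" and QP: "Q * P = 1\<^sub>m n" and APTQ: "A = P * T * Q"
    by auto
  have "A * P = P * T * (Q * P)"
    using T P Q assoc_mult_mat[of "P * T" n n Q n P n] by (simp add: APTQ)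
  then have AP: "A * P = P * T"
    using T P by (simp add: QP)
  have "poly r (T $$ (i, i)) = 0" if "i < n" for i
    using r diag T that unfolding diag_mat_def by auto
  then have "mat_poly (r ^ n) T = 0\<^sub>m n n"
    using mat_poly_power_band[OF T ut] T by (auto intro!: eq_matI)
  then have "mat_poly (r ^ n) A * P = 0\<^sub>m n n"
    using mat_poly_intertwine[OF A T P AP] P by simp
  moreover have "mat_poly (r ^ n) A * P * Q = mat_poly (r ^ n) A"
    using assoc_mult_mat[OF mat_poly_carrier[OF A] P Q] A by (simp add: PQ)
  ultimately have "mat_poly (r ^ n) A = 0\<^sub>m n n"
    using Q by (metis left_mult_zero_mat)
  then show ?thesis
    using mat_poly_power_eq_0_imp_eq_0[OF A sym] by blast
qed

section \<open>Quadratic forms of real symmetric matrices\<close>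

text \<open>Vectors of \<open>\<real>\<^sup>n\<close> are represented by functions \<open>nat \<Rightarrow> real\<close> on \<open>{..<n}\<close>.\<close>

definition mat_apply :: "nat \<Rightarrow> real mat \<Rightarrow> (nat \<Rightarrow> real) \<Rightarrow> nat \<Rightarrow> real" where
  "mat_apply n M x u = (\<Sum>v<n. M $$ (u, v) * x v)"

definition quad_form :: "nat \<Rightarrow> real mat \<Rightarrow> (nat \<Rightarrow> real) \<Rightarrow> real" where
  "quad_form n M x = (\<Sum>u<n. \<Sum>v<n. x u * M $$ (u, v) * x v)"

lemma quad_form_mat_apply: "quad_form n M x = (\<Sum>u<n. x u * mat_apply n M x u)"
  unfolding quad_form_def mat_apply_def by (simp add: sum_distrib_left mult.assoc)

lemma quad_form_square:
  assumes G: "G \<in> carrier_mat n n" and sym: "transpose_mat G = G"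
  shows "quad_form n (G * G) x = (\<Sum>l<n. (mat_apply n G x l)\<^sup>2)"
proof -
  have col: "mat_apply n G x l = (\<Sum>u<n. x u * G $$ (u, l))" if "l < n" for l
    unfolding mat_apply_def
  proof (rule sum.cong[OF refl])
    fix u assume "u \<in> {..<n}"
    with that show "G $$ (l, u) * x u = x u * G $$ (u, l)"
      using symmetric_matD[OF G sym, of l u] by simp
  qed
  have "quad_form n (G * G) x = (\<Sum>u<n. \<Sum>v<n. \<Sum>l<n. x u * G $$ (u, l) * G $$ (l, v) * x v)"
    unfolding quad_form_def using index_mult_mat_sum[OF G G]
    by (intro sum.cong refl) (simp add: sum_distrib_left sum_distrib_right mult.assoc)
  also have "\<dots> = (\<Sum>u<n. \<Sum>l<n. \<Sum>v<n. x u * G $$ (u, l) * G $$ (l, v) * x v)"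
    by (rule sum.cong[OF refl], rule sum.swap)
  also have "\<dots> = (\<Sum>l<n. \<Sum>u<n. \<Sum>v<n. x u * G $$ (u, l) * G $$ (l, v) * x v)"
    by (rule sum.swap)
  also have "\<dots> = (\<Sum>l<n. (\<Sum>u<n. x u * G $$ (u, l)) * mat_apply n G x l)"
    by (simp add: mat_apply_def sum_product mult.assoc)
  also have "\<dots> = (\<Sum>l<n. (mat_apply n G x l)\<^sup>2)"
    using col by (simp add: power2_eq_square)
  finally show ?thesis .
qed

lemma quad_form_add_smult_one:
  assumes F: "F \<in> carrier_mat n n"
  shows "quad_form n (F + c \<cdot>\<^sub>m 1\<^sub>m n) y = quad_form n F y + c * (\<Sum>u<n. (y u)\<^sup>2)"
proof -
  have "quad_form n (F + c \<cdot>\<^sub>m 1\<^sub>m n) y =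
      (\<Sum>u<n. \<Sum>v<n. y u * F $$ (u, v) * y v + (if v = u then c * (y u)\<^sup>2 else 0))"
    unfolding quad_form_def using F
    by (intro sum.cong refl) (auto simp: algebra_simps power2_eq_square)
  then show ?thesis
    by (simp add: quad_form_def sum.distrib sum_distrib_left)
qed

lemma poly_interpolation_exists:
  fixes v :: "'a::field \<Rightarrow> 'a"
  assumes "finite S"
  shows "\<exists>g. \<forall>s\<in>S. poly g s = v s"
  using assms
proof (induct S rule: finite_induct)
  case empty
  then show ?case by simp
next
  case (insert a S)
  then obtain g where g: "\<forall>s\<in>S. poly g s = v s"
    by blast
  define q where "q = (\<Prod>s\<in>S. [:- s, 1:])"
  have "poly q a \<noteq> 0" and "\<forall>s\<in>S. poly q s = 0"
    using insert unfolding q_def by (auto simp: poly_prod)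
  then have "\<forall>s\<in>insert a S. poly (g + smult ((v a - poly g a) / poly q a) q) s = v s"
    using g by auto
  then show ?case
    by blast
qed

lemma quad_form_mat_poly_nonneg:
  fixes A :: "real mat"
  assumes A: "A \<in> carrier_mat n n" and sym: "transpose_mat A = A"
    and cp: "char_poly A = (\<Prod>a\<leftarrow>ev. [:- a, 1:])"
    and f: "\<And>x. x \<in> set ev \<Longrightarrow> poly f x \<ge> 0"
  shows "quad_form n (mat_poly f A) y \<ge> 0"
proof -
  obtain g where g: "\<forall>s\<in>set ev. poly g s = sqrt (poly f s)"
    using poly_interpolation_exists[of "set ev" "\<lambda>s. sqrt (poly f s)"] by auto
  have "mat_poly (f - g * g) A = 0\<^sub>m n n"
    by (rule mat_poly_eq_0_if_vanishes_on_eigenvalues[OF A sym cp]) (use g f in auto)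
  moreover have "mat_poly f A = mat_poly (f - g * g) A + mat_poly (g * g) A"
    using mat_poly_add[OF A, of "f - g * g" "g * g"] by simp
  ultimately have "mat_poly f A = mat_poly (g * g) A"
    using A by simp
  then have "mat_poly f A = mat_poly g A * mat_poly g A"
    by (simp add: mat_poly_mult[OF A])
  moreover have "transpose_mat (mat_poly g A) = mat_poly g A"
    using mat_poly_transpose[OF A] sym by simp
  ultimately show ?thesis
    using quad_form_square[of "mat_poly g A" n y] A by (simp add: sum_nonneg)
qed

lemma mat_apply_mat_poly_eigen:
  assumes A: "A \<in> carrier_mat n n" and w: "\<And>u. u < n \<Longrightarrow> mat_apply n A w u = \<mu> * w u"
    and "u < n"
  shows "mat_apply n (mat_poly f A) w u = poly f \<mu> * w u"
  using \<open>u < n\<close>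
proof (induct f arbitrary: u)
  case 0
  with A show ?case by (simp add: mat_apply_def)
next
  case (pCons a f)
  have "(\<Sum>v<n. (if u = v then a else 0) * w v) = (\<Sum>v<n. if v = u then a * w u else 0)"
    by (rule sum.cong) auto
  then have "mat_apply n (mat_poly (pCons a f) A) w u =
      a * w u + (\<Sum>v<n. \<Sum>l<n. A $$ (u, l) * mat_poly f A $$ (l, v) * w v)"
    using pCons.prems
    by (simp add: mat_apply_def index_mat_poly_pCons[OF A] distrib_right sum.distrib sum_distrib_right)
  also have "(\<Sum>v<n. \<Sum>l<n. A $$ (u, l) * mat_poly f A $$ (l, v) * w v) =
      (\<Sum>l<n. A $$ (u, l) * mat_apply n (mat_poly f A) w l)"
    unfolding mat_apply_def by (subst sum.swap) (simp add: sum_distrib_left mult.assoc)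
  also have "\<dots> = poly f \<mu> * mat_apply n A w u"
    using pCons.hyps(2) unfolding mat_apply_def by (simp add: sum_distrib_left mult_ac)
  finally show ?case
    using w[OF pCons.prems] by (simp add: algebra_simps)
qed

lemma unit_eigenfunction_exists:
  fixes A :: "real mat"
  assumes A: "A \<in> carrier_mat n n" and "eigenvalue A \<mu>"
  obtains w where "(\<Sum>u<n. (w u)\<^sup>2) = 1" and "\<And>u. u < n \<Longrightarrow> mat_apply n A w u = \<mu> * w u"
proof -
  obtain v where v: "v \<in> carrier_vec n" "v \<noteq> 0\<^sub>v n" "A *\<^sub>v v = \<mu> \<cdot>\<^sub>v v"
    using assms unfolding eigenvalue_def eigenvector_def by auto
  define s where "s = (\<Sum>u<n. (v $ u)\<^sup>2)"
  obtain u where u: "u < n" "v $ u \<noteq> 0"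
    using v by (metis eq_vecI carrier_vecD index_zero_vec)
  have "(v $ u)\<^sup>2 \<le> s"
    unfolding s_def by (rule member_le_sum) (use u in auto)
  with u have s: "s > 0"
    by (smt (verit) zero_less_power2)
  show ?thesis
  proof
    show "(\<Sum>u<n. (v $ u / sqrt s)\<^sup>2) = 1"
      using s by (simp add: power_divide flip: sum_divide_distrib s_def)
    show "mat_apply n A (\<lambda>u. v $ u / sqrt s) u = \<mu> * (v $ u / sqrt s)" if "u < n" for u
    proof -
      have "mat_apply n A (\<lambda>u. v $ u) u = (A *\<^sub>v v) $ u"
        using that A v(1) unfolding mat_apply_def
        by (auto simp: scalar_prod_def atLeast0LessThan intro!: sum.cong)
      also have "\<dots> = \<mu> * v $ u"
        using v that by simp
      finally show ?thesis
        by (simp add: mat_apply_def flip: sum_divide_distrib)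
    qed
  qed
qed

lemma sum_mat_apply_symmetric:
  assumes B: "B \<in> carrier_mat n n" and sym: "transpose_mat B = B"
  shows "(\<Sum>u<n. y u * mat_apply n B x u) = (\<Sum>u<n. x u * mat_apply n B y u)"
proof -
  have "(\<Sum>u<n. y u * mat_apply n B x u) = (\<Sum>u<n. \<Sum>v<n. y u * B $$ (v, u) * x v)"
    unfolding mat_apply_def sum_distrib_left
    by (intro sum.cong refl) (simp add: symmetric_matD[OF B sym] mult.assoc)
  also have "\<dots> = (\<Sum>v<n. \<Sum>u<n. y u * B $$ (v, u) * x v)"
    by (rule sum.swap)
  also have "\<dots> = (\<Sum>v<n. x v * mat_apply n B y v)"
    unfolding mat_apply_def sum_distrib_left by (simp add: mult_ac)
  finally show ?thesis .
qed

lemma quad_form_ge_eigen_split: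
  assumes B: "B \<in> carrier_mat n n" and sym: "transpose_mat B = B"
    and w: "(\<Sum>u<n. (w u)\<^sup>2) = 1" and eig: "\<And>u. u < n \<Longrightarrow> mat_apply n B w u = \<mu> * w u"
    and lam: "\<And>y. quad_form n B y \<ge> lam * (\<Sum>u<n. (y u)\<^sup>2)"
  shows "quad_form n B x \<ge> lam * (\<Sum>u<n. (x u)\<^sup>2) + (\<mu> - lam) * (\<Sum>u<n. w u * x u)\<^sup>2"
proof -
  define t where "t = (\<Sum>u<n. w u * x u)"
  define y where "y u = x u - t * w u" for u
  have "mat_apply n B y u = mat_apply n B x u - t * mat_apply n B w u" for u
    unfolding mat_apply_def y_def by (simp add: algebra_simps sum_subtractf sum_distrib_left)
  then have By: "mat_apply n B y u = mat_apply n B x u - t * \<mu> * w u" if "u < n" for u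
    using eig[OF that] by simp
  have "(\<Sum>u<n. w u * mat_apply n B x u) = (\<Sum>u<n. x u * mat_apply n B w u)"
    by (rule sum_mat_apply_symmetric[OF B sym])
  also have "\<dots> = \<mu> * t"
    unfolding t_def sum_distrib_left by (intro sum.cong refl) (simp add: eig)
  finally have wBx: "(\<Sum>u<n. w u * mat_apply n B x u) = \<mu> * t" .
  have "quad_form n B y = (\<Sum>u<n. (x u - t * w u) * (mat_apply n B x u - t * \<mu> * w u))"
    unfolding quad_form_mat_apply by (simp add: By y_def)
  also have "\<dots> = quad_form n B x - t * \<mu> * (\<Sum>u<n. x u * w u)
      - t * (\<Sum>u<n. w u * mat_apply n B x u) + t * t * \<mu> * (\<Sum>u<n. (w u)\<^sup>2)"
    unfolding quad_form_mat_apply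
    by (simp add: algebra_simps sum_subtractf sum.distrib sum_distrib_left power2_eq_square)
  also have "\<dots> = quad_form n B x - \<mu> * t\<^sup>2"
    using wBx w unfolding t_def by (simp add: mult.commute power2_eq_square)
  finally have qy: "quad_form n B y = quad_form n B x - \<mu> * t\<^sup>2" .
  have "(\<Sum>u<n. (y u)\<^sup>2) =
      (\<Sum>u<n. (x u)\<^sup>2) - 2 * t * (\<Sum>u<n. w u * x u) + t\<^sup>2 * (\<Sum>u<n. (w u)\<^sup>2)"
    unfolding y_def
    by (simp add: power2_diff sum_subtractf sum.distrib sum_distrib_left algebra_simps power_mult_distrib)
  also have "\<dots> = (\<Sum>u<n. (x u)\<^sup>2) - t\<^sup>2"
    using w unfolding t_def by (simp add: power2_eq_square)
  finally have "(\<Sum>u<n. (y u)\<^sup>2) = (\<Sum>u<n. (x u)\<^sup>2) - t\<^sup>2" .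
  with lam[of y] qy show ?thesis
    unfolding t_def[symmetric] by (simp add: algebra_simps)
qed

lemma quad_form_mat_poly_lower_bound:
  fixes A :: "real mat" and p :: "real poly"
  assumes A: "A \<in> carrier_mat n n" and sym: "transpose_mat A = A"
    and cp: "char_poly A = (\<Prod>a\<leftarrow>ev. [:- a, 1:])" and \<mu>: "\<mu> \<in> set ev"
    and lam: "\<And>x. x \<in> set ev \<Longrightarrow> lam \<le> poly p x"
  obtains w where "(\<Sum>u<n. (w u)\<^sup>2) = 1"
    and "\<And>y. quad_form n (mat_poly p A) y \<ge>
      lam * (\<Sum>u<n. (y u)\<^sup>2) + (poly p \<mu> - lam) * (\<Sum>u<n. w u * y u)\<^sup>2"
proof -
  have "eigenvalue A \<mu>"
    using eigenvalue_root_char_poly[OF A] cp linear_poly_root[OF \<mu>] by simp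
  then obtain w where w: "(\<Sum>u<n. (w u)\<^sup>2) = 1" and eig: "\<And>u. u < n \<Longrightarrow> mat_apply n A w u = \<mu> * w u"
    using unit_eigenfunction_exists[OF A] by blast
  have "mat_poly p A = mat_poly (p - [:lam:]) A + lam \<cdot>\<^sub>m 1\<^sub>m n"
    using mat_poly_add[OF A, of "p - [:lam:]" "[:lam:]"] by (simp add: mat_poly_const[OF A])
  then have "quad_form n (mat_poly p A) y \<ge> lam * (\<Sum>u<n. (y u)\<^sup>2)" for y
    using quad_form_add_smult_one[OF mat_poly_carrier[OF A], of "p - [:lam:]" lam y]
      quad_form_mat_poly_nonneg[OF A sym cp, of "p - [:lam:]" y] lam
    by simp
  moreover have "transpose_mat (mat_poly p A) = mat_poly p A"
    using mat_poly_transpose[OF A] sym by simp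
  ultimately show ?thesis
    using that[OF w] quad_form_ge_eigen_split[OF mat_poly_carrier[OF A] _ w] mat_apply_mat_poly_eigen[OF A eig]
    by blast
qed

section \<open>A Hoffman-type bound for Gram representations\<close>

lemma sum_squared_le_card_mult_sum_squares:
  fixes f :: "'a \<Rightarrow> real"
  assumes "finite H"
  shows "(\<Sum>h\<in>H. f h)\<^sup>2 \<le> card H * (\<Sum>h\<in>H. (f h)\<^sup>2)"
proof -
  have "0 \<le> (\<Sum>h\<in>H. \<Sum>g\<in>H. (f h - f g)\<^sup>2)"
    by (intro sum_nonneg) auto
  also have "\<dots> = 2 * (card H * (\<Sum>h\<in>H. (f h)\<^sup>2) - (\<Sum>h\<in>H. f h)\<^sup>2)"
    by (simp add: power2_diff sum.distrib sum_subtractf sum_distrib_left sum_distrib_right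
        power2_eq_square algebra_simps)
  finally show ?thesis
    by simp
qed

lemma sum_quad_form_rescaled:
  "(\<Sum>j\<in>J. quad_form n B (\<lambda>u. w u * x j u)) =
    (\<Sum>u<n. \<Sum>v<n. w u * w v * B $$ (u, v) * (\<Sum>j\<in>J. x j u * x j v))"
proof -
  have "(\<Sum>j\<in>J. quad_form n B (\<lambda>u. w u * x j u)) =
      (\<Sum>j\<in>J. \<Sum>u<n. \<Sum>v<n. w u * w v * B $$ (u, v) * (x j u * x j v))"
    unfolding quad_form_def by (simp add: mult_ac)
  also have "\<dots> = (\<Sum>u<n. \<Sum>j\<in>J. \<Sum>v<n. w u * w v * B $$ (u, v) * (x j u * x j v))"
    by (rule sum.swap)
  also have "\<dots> = (\<Sum>u<n. \<Sum>v<n. \<Sum>j\<in>J. w u * w v * B $$ (u, v) * (x j u * x j v))"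
    by (rule sum.cong[OF refl], rule sum.swap)
  finally show ?thesis
    by (simp add: sum_distrib_left)
qed

lemma sum_quad_form_rescaled_orthogonal:
  assumes orth: "\<And>u v. u < n \<Longrightarrow> v < n \<Longrightarrow> u \<noteq> v \<Longrightarrow> B $$ (u, v) \<noteq> 0 \<Longrightarrow>
      (\<Sum>j\<in>J. x j u * x j v) = 0"
  shows "(\<Sum>j\<in>J. quad_form n B (\<lambda>u. w u * x j u)) =
    (\<Sum>u<n. (w u)\<^sup>2 * B $$ (u, u) * (\<Sum>j\<in>J. (x j u)\<^sup>2))"
proof -
  have row: "(\<Sum>v<n. w u * w v * B $$ (u, v) * (\<Sum>j\<in>J. x j u * x j v)) =
      (w u)\<^sup>2 * B $$ (u, u) * (\<Sum>j\<in>J. (x j u)\<^sup>2)" if "u < n" for u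
  proof -
    have "(\<Sum>v<n. w u * w v * B $$ (u, v) * (\<Sum>j\<in>J. x j u * x j v)) =
        (\<Sum>v<n. if v = u then (w u)\<^sup>2 * B $$ (u, u) * (\<Sum>j\<in>J. (x j u)\<^sup>2) else 0)"
      using orth[OF that] by (intro sum.cong refl) (auto simp: power2_eq_square)
    with that show ?thesis
      by simp
  qed
  show ?thesis
    unfolding sum_quad_form_rescaled using row by (intro sum.cong refl) auto
qed

lemma gram_class_bound:
  fixes B :: "real mat" and x :: "'j \<Rightarrow> nat \<Rightarrow> real" and lam \<mu> :: real
  assumes J: "finite J" "j\<^sub>0 \<in> J"
    and bound: "\<And>y. quad_form n B y \<ge> lam * (\<Sum>u<n. (y u)\<^sup>2) + (\<mu> - lam) * (\<Sum>u<n. w u * y u)\<^sup>2"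
    and lam: "lam \<le> \<mu>"
    and orth: "\<And>u v. u < n \<Longrightarrow> v < n \<Longrightarrow> u \<noteq> v \<Longrightarrow> B $$ (u, v) \<noteq> 0 \<Longrightarrow>
      (\<Sum>j\<in>J. x j u * x j v) = 0"
    and norm: "\<And>u. u < n \<Longrightarrow> (\<Sum>j\<in>J. (x j u)\<^sup>2) = x j\<^sub>0 u"
  defines "\<tau> \<equiv> \<Sum>u<n. (w u)\<^sup>2 * x j\<^sub>0 u"
  shows "lam * \<tau> + (\<mu> - lam) * \<tau>\<^sup>2 \<le> (\<Sum>u<n. (w u)\<^sup>2 * B $$ (u, u) * x j\<^sub>0 u)"
proof -
  let ?y = "\<lambda>j u. w u * x j u"
  have "(\<Sum>j\<in>J. \<Sum>u<n. (?y j u)\<^sup>2) = (\<Sum>u<n. (w u)\<^sup>2 * (\<Sum>j\<in>J. (x j u)\<^sup>2))"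
    by (subst sum.swap) (simp add: sum_distrib_left power_mult_distrib)
  also have "\<dots> = \<tau>"
    unfolding \<tau>_def using norm by simp
  finally have norms: "(\<Sum>j\<in>J. \<Sum>u<n. (?y j u)\<^sup>2) = \<tau>" .
  have "(\<mu> - lam) * \<tau>\<^sup>2 \<le> (\<Sum>j\<in>J. (\<mu> - lam) * (\<Sum>u<n. w u * ?y j u)\<^sup>2)"
  proof -
    have "(\<Sum>u<n. w u * ?y j\<^sub>0 u) = \<tau>"
      unfolding \<tau>_def by (simp add: power2_eq_square mult_ac)
    then show ?thesis
      using member_le_sum[of j\<^sub>0 J "\<lambda>j. (\<mu> - lam) * (\<Sum>u<n. w u * ?y j u)\<^sup>2"] J lam by simp
  qed
  also have "\<dots> \<le> (\<Sum>j\<in>J. quad_form n B (?y j)) - lam * (\<Sum>j\<in>J. \<Sum>u<n. (?y j u)\<^sup>2)"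
    using sum_mono[of J "\<lambda>j. lam * (\<Sum>u<n. (?y j u)\<^sup>2) + (\<mu> - lam) * (\<Sum>u<n. w u * ?y j u)\<^sup>2"
        "\<lambda>j. quad_form n B (?y j)"] bound
    by (simp add: sum.distrib sum_distrib_left)
  also have "(\<Sum>j\<in>J. quad_form n B (?y j)) = (\<Sum>u<n. (w u)\<^sup>2 * B $$ (u, u) * x j\<^sub>0 u)"
    using sum_quad_form_rescaled_orthogonal[OF orth] norm by simp
  finally show ?thesis
    using norms by simp
qed

text \<open>Think of \<open>x h j u\<close>, \<open>j \<in> J\<close>, as the real coordinates of the vector \<open>P\<^sub>u\<^sub>,\<^sub>h e\<^sub>0\<close> of a
  quantum colouring, \<open>j\<^sub>0\<close> being the coordinate \<open>Re (P\<^sub>u\<^sub>,\<^sub>h)\<^sub>0\<^sub>0\<close>.\<close>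
lemma gram_partition_bound:
  fixes B :: "real mat" and x :: "'h \<Rightarrow> 'j \<Rightarrow> nat \<Rightarrow> real" and lam \<mu> W :: real
  assumes H: "finite H" and J: "finite J" "j\<^sub>0 \<in> J"
    and w: "(\<Sum>u<n. (w u)\<^sup>2) = 1"
    and bound: "\<And>y. quad_form n B y \<ge> lam * (\<Sum>u<n. (y u)\<^sup>2) + (\<mu> - lam) * (\<Sum>u<n. w u * y u)\<^sup>2"
    and lam: "lam \<le> \<mu>" and diag: "\<And>u. u < n \<Longrightarrow> B $$ (u, u) \<le> W"
    and orth: "\<And>h u v. h \<in> H \<Longrightarrow> u < n \<Longrightarrow> v < n \<Longrightarrow> u \<noteq> v \<Longrightarrow> B $$ (u, v) \<noteq> 0 \<Longrightarrow>
      (\<Sum>j\<in>J. x h j u * x h j v) = 0"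
    and norm: "\<And>h u. h \<in> H \<Longrightarrow> u < n \<Longrightarrow> (\<Sum>j\<in>J. (x h j u)\<^sup>2) = x h j\<^sub>0 u"
    and partition: "\<And>u. u < n \<Longrightarrow> (\<Sum>h\<in>H. x h j\<^sub>0 u) = 1"
  shows "\<mu> - lam \<le> card H * (W - lam)"
proof -
  define \<tau> where "\<tau> h = (\<Sum>u<n. (w u)\<^sup>2 * x h j\<^sub>0 u)" for h
  have colour_sum: "(\<Sum>h\<in>H. \<Sum>u<n. g u * x h j\<^sub>0 u) = (\<Sum>u<n. g u)" for g
  proof -
    have "(\<Sum>h\<in>H. \<Sum>u<n. g u * x h j\<^sub>0 u) = (\<Sum>u<n. g u * (\<Sum>h\<in>H. x h j\<^sub>0 u))"
      by (subst sum.swap) (simp add: sum_distrib_left)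
    then show ?thesis
      by (simp add: partition)
  qed
  have \<tau>_sum: "(\<Sum>h\<in>H. \<tau> h) = 1"
    using colour_sum[of "\<lambda>u. (w u)\<^sup>2"] w by (simp add: \<tau>_def)
  have per_colour: "lam * \<tau> h + (\<mu> - lam) * (\<tau> h)\<^sup>2 \<le> (\<Sum>u<n. (w u)\<^sup>2 * B $$ (u, u) * x h j\<^sub>0 u)"
    if "h \<in> H" for h
    using gram_class_bound[OF J bound lam orth[OF that] norm[OF that]] unfolding \<tau>_def .
  have "lam + (\<mu> - lam) * (\<Sum>h\<in>H. (\<tau> h)\<^sup>2) = (\<Sum>h\<in>H. lam * \<tau> h + (\<mu> - lam) * (\<tau> h)\<^sup>2)"
    using \<tau>_sum by (simp add: sum.distrib flip: sum_distrib_left)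
  also have "\<dots> \<le> (\<Sum>h\<in>H. \<Sum>u<n. (w u)\<^sup>2 * B $$ (u, u) * x h j\<^sub>0 u)"
    by (rule sum_mono) (rule per_colour)
  also have "\<dots> = (\<Sum>u<n. (w u)\<^sup>2 * B $$ (u, u))"
    by (rule colour_sum)
  also have "\<dots> \<le> (\<Sum>u<n. (w u)\<^sup>2 * W)"
    using diag by (intro sum_mono mult_left_mono) auto
  also have "\<dots> = W"
    using w by (simp flip: sum_distrib_right)
  finally have W: "lam + (\<mu> - lam) * (\<Sum>h\<in>H. (\<tau> h)\<^sup>2) \<le> W" .
  have "1 \<le> card H * (\<Sum>h\<in>H. (\<tau> h)\<^sup>2)"
    using sum_squared_le_card_mult_sum_squares[OF H, of \<tau>] \<tau>_sum by simp
  then have "(\<mu> - lam) * 1 \<le> (\<mu> - lam) * (card H * (\<Sum>h\<in>H. (\<tau> h)\<^sup>2))"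
    using lam by (intro mult_left_mono) auto
  then have "\<mu> - lam \<le> card H * ((\<mu> - lam) * (\<Sum>h\<in>H. (\<tau> h)\<^sup>2))"
    by (simp add: mult_ac)
  also have "\<dots> \<le> card H * (W - lam)"
    using W by (intro mult_left_mono) auto
  finally show ?thesis .
qed

section \<open>Graphs and quantum colourings\<close>

lemma adj_mat_carrier: "adj_mat n E \<in> carrier_mat n n"
  by (simp add: adj_mat_def)

lemma index_adj_mat: "u < n \<Longrightarrow> v < n \<Longrightarrow> adj_mat n E $$ (u, v) = (if E u v then 1 else 0)"
  by (simp add: adj_mat_def)

lemma adj_mat_symmetric: "simple_graph n E \<Longrightarrow> transpose_mat (adj_mat n E) = adj_mat n E"
  by (rule eq_matI) (auto simp: adj_mat_def simple_graph_def)

lemma dist_le_refl: "dist_le E k u u"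
  unfolding dist_le_def by (rule exI[of _ 0]) auto

lemma dist_le_mono: "dist_le E k u v \<Longrightarrow> k \<le> k' \<Longrightarrow> dist_le E k' u v"
  unfolding dist_le_def by (meson order_trans)

lemma dist_le_Suc: "E u l \<Longrightarrow> dist_le E k l v \<Longrightarrow> dist_le E (Suc k) u v"
  unfolding dist_le_def by (auto intro: relpow_Suc_I2)

lemma mat_poly_adj_mat_nonzero_imp_dist_le:
  fixes f :: "real poly"
  assumes "u < n" "v < n" "mat_poly f (adj_mat n E) $$ (u, v) \<noteq> 0"
  shows "dist_le E (degree f) u v"
  using assms
proof (induct f arbitrary: u)
  case 0
  then show ?case
    using adj_mat_carrier[of n E] by simp
next
  case (pCons a f)
  show ?case
  proof (cases "u = v")
    case True
    then show ?thesis by (simp add: dist_le_refl)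
  next
    case False
    with pCons.prems have "(\<Sum>l<n. adj_mat n E $$ (u, l) * mat_poly f (adj_mat n E) $$ (l, v)) \<noteq> 0"
      by (simp add: index_mat_poly_pCons[OF adj_mat_carrier])
    then obtain l where l: "l < n" and "adj_mat n E $$ (u, l) * mat_poly f (adj_mat n E) $$ (l, v) \<noteq> 0"
      by (meson lessThan_iff sum.neutral)
    then have "E u l" and F: "mat_poly f (adj_mat n E) $$ (l, v) \<noteq> 0"
      using index_adj_mat[OF pCons.prems(1) l] by (auto split: if_splits)
    moreover from F l pCons.prems(2) have "f \<noteq> 0"
      by (auto simp: adj_mat_def)
    ultimately show ?thesis
      using dist_le_Suc pCons.hyps(2)[OF l pCons.prems(2) F] by simp
  qed
qed

lemma index_mat_adjoint:
  fixes X :: "complex mat"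
  assumes "X \<in> carrier_mat d d" "i < d" "j < d"
  shows "mat_adjoint X $$ (i, j) = cnj (X $$ (j, i))"
  using assms by (simp add: mat_adjoint_def mat_of_rows_def)

lemma foldr_mat_add:
  assumes "\<And>h. h \<in> set hs \<Longrightarrow> f h \<in> carrier_mat d d"
  shows "foldr (\<lambda>h M. f h + M) hs (0\<^sub>m d d) \<in> carrier_mat d d \<and>
    (\<forall>i<d. \<forall>j<d. foldr (\<lambda>h M. f h + M) hs (0\<^sub>m d d) $$ (i, j) = (\<Sum>h\<leftarrow>hs. f h $$ (i, j)))"
  using assms by (induct hs) auto

lemma mat_sum_carrier:
  assumes "\<And>h. h \<in> {1..c} \<Longrightarrow> f h \<in> carrier_mat d d"
  shows "mat_sum d f c \<in> carrier_mat d d"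
proof -
  have "set [1..<c+1] = {1..c}"
    by auto
  from foldr_mat_add[of "[1..<c+1]" f d, unfolded this] assms show ?thesis
    unfolding mat_sum_def by blast
qed

lemma index_mat_sum:
  assumes "\<And>h. h \<in> {1..c} \<Longrightarrow> f h \<in> carrier_mat d d" "i < d" "j < d"
  shows "mat_sum d f c $$ (i, j) = (\<Sum>h\<in>{1..c}. f h $$ (i, j))"
proof -
  have hs: "set [1..<c+1] = {1..c}"
    by auto
  from foldr_mat_add[of "[1..<c+1]" f d, unfolded hs] assms
  have "mat_sum d f c $$ (i, j) = (\<Sum>h\<leftarrow>[1..<c+1]. f h $$ (i, j))"
    unfolding mat_sum_def by blast
  then show ?thesis
    unfolding sum_list_distinct_conv_sum_set[OF distinct_upt] hs .
qed

lemma quantum_k_coloring_exists: "\<exists>d>0. \<exists>P. quantum_k_coloring n E k n d P"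
proof -
  define P :: "nat \<Rightarrow> nat \<Rightarrow> complex mat" where "P v h = (if h = v + 1 then 1\<^sub>m 1 else 0\<^sub>m 1 1)" for v h
  have P: "P v h \<in> carrier_mat 1 1" for v h
    unfolding P_def by auto
  have "orth_projector 1 (P v h)" for v h
    unfolding orth_projector_def P_def
    by (auto intro!: eq_matI simp: mat_adjoint_def mat_of_rows_def)
  moreover have "mat_sum 1 (P v) n = 1\<^sub>m 1" if "v < n" for v
  proof (rule eq_matI)
    fix i j assume "i < dim_row (1\<^sub>m 1 :: complex mat)" "j < dim_col (1\<^sub>m 1 :: complex mat)"
    have "P v h $$ (0, 0) = (if h = v + 1 then 1 else 0)" for h
      unfolding P_def by simp
    with index_mat_sum[of n "P v" 1 0 0] P that \<open>i < _\<close> \<open>j < _\<close>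
    show "mat_sum 1 (P v) n $$ (i, j) = 1\<^sub>m 1 $$ (i, j)"
      by simp
  qed (use mat_sum_carrier[of n "P v" 1] P in auto)
  moreover have "P v h * P w h = 0\<^sub>m 1 1" if "v \<noteq> w" for v w h
    using that unfolding P_def by (auto intro!: eq_matI)
  ultimately have "quantum_k_coloring n E k n 1 P"
    unfolding quantum_k_coloring_def by blast
  then show ?thesis
    by blast
qed

lemma chi_kq_attained:
  obtains d P where "d > 0" "quantum_k_coloring n E k (chi_kq n E k) d P"
proof -
  have "\<exists>c d. d > 0 \<and> (\<exists>P. quantum_k_coloring n E k c d P)"
    using quantum_k_coloring_exists by blast
  then have "\<exists>d>0. \<exists>P. quantum_k_coloring n E k (chi_kq n E k) d P"
    unfolding chi_kq_def by (rule LeastI_ex[where P = "\<lambda>c. \<exists>d>0. \<exists>P. quantum_k_coloring n E k c d P"])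
  with that show ?thesis
    by blast
qed

text \<open>The real coordinates of \<open>\<complex>\<^sup>d \<cong> \<real>\<^sup>2\<^sup>d\<close>.\<close>
definition re_im :: "bool \<Rightarrow> complex \<Rightarrow> real" where
  "re_im b z = (if b then Im z else Re z)"

lemma Re_hermitian_mult_diag:
  fixes X Y :: "complex mat"
  assumes X: "X \<in> carrier_mat d d" and Y: "Y \<in> carrier_mat d d" and herm: "mat_adjoint X = X"
    and i: "i < d"
  shows "Re ((X * Y) $$ (i, i)) =
    (\<Sum>(l, b)\<in>{..<d} \<times> UNIV. re_im b (X $$ (l, i)) * re_im b (Y $$ (l, i)))"
proof -
  have "X $$ (i, l) = cnj (X $$ (l, i))" if "l < d" for l
    using index_mat_adjoint[OF X i that] herm by simp
  then have "(X * Y) $$ (i, i) = (\<Sum>l<d. cnj (X $$ (l, i)) * Y $$ (l, i))"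
    using index_mult_mat_sum[OF X Y i i] by simp
  then show ?thesis
    by (simp add: Re_sum re_im_def UNIV_bool flip: sum.cartesian_product)
qed

lemma quantum_k_coloring_bound:
  fixes B :: "real mat" and lam \<mu> W :: real
  assumes col: "quantum_k_coloring n E k c d P" and d: "d > 0"
    and w: "(\<Sum>u<n. (w u)\<^sup>2) = 1"
    and bound: "\<And>y. quad_form n B y \<ge> lam * (\<Sum>u<n. (y u)\<^sup>2) + (\<mu> - lam) * (\<Sum>u<n. w u * y u)\<^sup>2"
    and lam: "lam \<le> \<mu>" and diag: "\<And>u. u < n \<Longrightarrow> B $$ (u, u) \<le> W"
    and supp: "\<And>u v. u < n \<Longrightarrow> v < n \<Longrightarrow> u \<noteq> v \<Longrightarrow> B $$ (u, v) \<noteq> 0 \<Longrightarrow> dist_le E k u v"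
  shows "\<mu> - lam \<le> c * (W - lam)"
proof -
  have proj: "P u h \<in> carrier_mat d d" "P u h * P u h = P u h" "mat_adjoint (P u h) = P u h"
    if "u < n" "h \<in> {1..c}" for u h
    using col that unfolding quantum_k_coloring_def orth_projector_def by auto
  define x where "x h lb u = re_im (snd lb) (P u h $$ (fst lb, 0))" for h lb u
  have gram: "(\<Sum>lb\<in>{..<d} \<times> UNIV. x h lb u * x h lb v) = Re ((P u h * P v h) $$ (0, 0))"
    if "u < n" "v < n" "h \<in> {1..c}" for u v h
    using Re_hermitian_mult_diag[OF proj(1)[OF that(1,3)] proj(1)[OF that(2,3)] proj(3)[OF that(1,3)] d]
    unfolding x_def by (simp add: case_prod_beta)
  have "\<mu> - lam \<le> card {1..c} * (W - lam)"
  proof (rule gram_partition_bound[where x = x and j\<^sub>0 = "(0, False)"])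
    show "(\<Sum>lb\<in>{..<d} \<times> UNIV. x h lb u * x h lb v) = 0"
      if "h \<in> {1..c}" "u < n" "v < n" "u \<noteq> v" "B $$ (u, v) \<noteq> 0" for h u v
    proof -
      have "P u h * P v h = 0\<^sub>m d d"
        using col supp that unfolding quantum_k_coloring_def by blast
      with gram that d show ?thesis
        by simp
    qed
    show "(\<Sum>lb\<in>{..<d} \<times> UNIV. (x h lb u)\<^sup>2) = x h (0, False) u" if "h \<in> {1..c}" "u < n" for h u
      using gram[of u u h] proj(2)[of u h] that by (simp add: power2_eq_square x_def re_im_def)
    show "(\<Sum>h\<in>{1..c}. x h (0, False) u) = 1" if "u < n" for u
    proof -
      have "mat_sum d (P u) c = 1\<^sub>m d"
        using col that unfolding quantum_k_coloring_def by blast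
      then have "(\<Sum>h\<in>{1..c}. P u h $$ (0, 0)) = 1"
        using index_mat_sum[of c "P u" d 0 0] proj(1)[OF that] d by simp
      then show ?thesis
        unfolding x_def re_im_def by (simp flip: Re_sum)
    qed
  qed (use d w bound lam diag in auto)
  then show ?thesis
    by simp
qed

lemma chi_kq_ge_ratio:
  fixes B :: "real mat" and lam \<mu> W :: real
  assumes w: "(\<Sum>u<n. (w u)\<^sup>2) = 1"
    and bound: "\<And>y. quad_form n B y \<ge> lam * (\<Sum>u<n. (y u)\<^sup>2) + (\<mu> - lam) * (\<Sum>u<n. w u * y u)\<^sup>2"
    and lam: "lam < \<mu>" and diag: "\<And>u. u < n \<Longrightarrow> B $$ (u, u) \<le> W"
    and supp: "\<And>u v. u < n \<Longrightarrow> v < n \<Longrightarrow> u \<noteq> v \<Longrightarrow> B $$ (u, v) \<noteq> 0 \<Longrightarrow> dist_le E k u v"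
  shows "(\<mu> - lam) / (W - lam) \<le> chi_kq n E k"
proof -
  obtain d P where "d > 0" and col: "quantum_k_coloring n E k (chi_kq n E k) d P"
    by (rule chi_kq_attained)
  from quantum_k_coloring_bound[OF col \<open>d > 0\<close> w bound _ diag supp] lam
  have bound_chi: "\<mu> - lam \<le> chi_kq n E k * (W - lam)"
    by simp
  with lam have "0 < real (chi_kq n E k) * (W - lam)"
    by linarith
  then have "W - lam > 0"
    by (simp add: zero_less_mult_iff)
  with bound_chi show ?thesis
    by (simp add: pos_divide_le_eq)
qed

lemma Min_poly_tail:
  fixes p :: "real poly"
  assumes len: "length ev = n" and n2: "n \<ge> 2"
    and gap: "\<forall>i\<in>{1..<n}. poly p (ev ! 0) > poly p (ev ! i)"
  defines "lam \<equiv> Min ((\<lambda>i. poly p (ev ! i)) ` {1..<n})"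
  shows "lam < poly p (ev ! 0)" and "\<And>x. x \<in> set ev \<Longrightarrow> lam \<le> poly p x"
proof -
  have "lam \<in> (\<lambda>i. poly p (ev ! i)) ` {1..<n}"
    unfolding lam_def using n2 by (intro Min_in) auto
  with gap show lam_less: "lam < poly p (ev ! 0)"
    by auto
  fix x assume "x \<in> set ev"
  then obtain i where "i < length ev" "x = ev ! i"
    by (auto simp: in_set_conv_nth)
  with lam_less len show "lam \<le> poly p x"
    unfolding lam_def by (cases "i = 0") (auto intro: Min_le)
qed

theorem theorem5p2:
  fixes n k :: nat and E :: "nat \<Rightarrow> nat \<Rightarrow> bool" and p :: "real poly"
    and ev :: "real list"
  assumes G: "simple_graph n E"
    and n2: "n \<ge> 2"
    and ev_len: "length ev = n"
    and ev_sorted: "sorted_wrt (\<ge>) ev"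
    and ev_char: "char_poly (adj_mat n E) = (\<Prod>a\<leftarrow>ev. [:- a, 1:])"
    and k1: "k \<ge> 1"
    and pdeg: "degree p \<le> k"
    and pgap: "\<forall>i\<in>{1..<n}. poly p (ev ! 0) > poly p (ev ! i)"
  shows "real (chi_kq n E k) \<ge>
    (let W = Max ((\<lambda>u. mat_poly p (adj_mat n E) $$ (u, u)) ` {0..<n});
         lam = Min ((\<lambda>i. poly p (ev ! i)) ` {1..<n})
     in (poly p (ev ! 0) - lam) / (W - lam))"
proof -
  define A where "A = adj_mat n E"
  define lam where "lam = Min ((\<lambda>i. poly p (ev ! i)) ` {1..<n})"
  have A: "A \<in> carrier_mat n n" and sym: "transpose_mat A = A"
    unfolding A_def using adj_mat_carrier adj_mat_symmetric[OF G] by auto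
  note lam = Min_poly_tail[OF ev_len n2 pgap, folded lam_def]
  have "ev ! 0 \<in> set ev"
    using n2 ev_len by simp
  then obtain w where w: "(\<Sum>u<n. (w u)\<^sup>2) = 1" and bound: "\<And>y. quad_form n (mat_poly p A) y \<ge>
      lam * (\<Sum>u<n. (y u)\<^sup>2) + (poly p (ev ! 0) - lam) * (\<Sum>u<n. w u * y u)\<^sup>2"
    using quad_form_mat_poly_lower_bound[OF A sym ev_char[folded A_def] _ lam(2)] by blast
  have "dist_le E k u v" if "u < n" "v < n" "mat_poly p A $$ (u, v) \<noteq> 0" for u v
    using mat_poly_adj_mat_nonzero_imp_dist_le[of u n v p E] dist_le_mono[OF _ pdeg] that
    unfolding A_def by simp
  with chi_kq_ge_ratio[OF w bound lam(1)] show ?thesis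
    unfolding Let_def A_def[symmetric] lam_def[symmetric] by (simp add: Max_ge)
qed

end
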